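(* Let $F \in \mathbb{C}^{n \times n}$ be a unitary matrix and let $y = F\hat{x} + e$, where $\hat{x} \in \mathbb{C}^{n}$ is $k$-sparse and $e \in \mathbb{C}^{n}$. If $\|e\|_2 \leq \eta$, then any solution $x^{\#}$ of the Basis Pursuit problem $\min_{z \in \mathbb{C}^n}\|z\|_1$ subject to $\|Fz - y\|_2 \leq \eta$ satisfies $$\| x^{\#}-\hat{x}\|_1 \leq 4\sqrt{k}\,\eta \quad\text{and}\quad \| x^{\#}-\hat{x}\|_2 \leq 6\eta .$$
   Context: A vector is $k$-sparse if it has at most $k$ nonzero entries. *)

theory Defs
  imports "HOL-Analysis.Analysis"
begin

definition adjoint_mat :: "complex ^'n ^'m \<Rightarrow> complex ^'m ^'n" where
  "adjoint_mat F = (\<chi> i j. cnj (F $ j $ i))"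

definition unitary_mat :: "complex ^'n ^'n \<Rightarrow> bool" where
  "unitary_mat F \<longleftrightarrow> adjoint_mat F ** F = mat 1 \<and> F ** adjoint_mat F = mat 1"

text \<open>The l1 norm; the l2 norm is the library norm on complex^'n.\<close>
definition l1_norm :: "complex ^'n \<Rightarrow> real" where
  "l1_norm x = (\<Sum>i\<in>UNIV. cmod (x $ i))"

definition sparse :: "nat \<Rightarrow> complex ^'n \<Rightarrow> bool" where
  "sparse k x \<longleftrightarrow> card {i. x $ i \<noteq> 0} \<le> k"

definition bp_solution :: "complex ^'n ^'n \<Rightarrow> complex ^'n \<Rightarrow> real \<Rightarrow> complex ^'n \<Rightarrow> bool" where
  "bp_solution F y \<eta> x \<longleftrightarrow> norm (F *v x - y) \<le> \<eta> \<and>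
     (\<forall>z. norm (F *v z - y) \<le> \<eta> \<longrightarrow> l1_norm x \<le> l1_norm z)"

end

theory Submission
  imports Defs
begin

text \<open>
  Let \<open>x\<close> be the sparse vector, \<open>h = x\<^sup># - x\<close> and \<open>S\<close> the support of \<open>x\<close>.
  Since both \<open>x\<^sup>#\<close> and \<open>x\<close> are feasible and \<open>F\<close> is an isometry,
  \<open>\<parallel>h\<parallel>\<^sub>2 = \<parallel>F h\<parallel>\<^sub>2 \<le> 2\<eta>\<close>. Minimality of \<open>\<parallel>x\<^sup>#\<parallel>\<^sub>1\<close> forces the mass of \<open>h\<close> off \<open>S\<close>
  to be at most its mass on \<open>S\<close>, and by Cauchy-Schwarz the latter is at most
  \<open>\<surd>k \<parallel>h\<parallel>\<^sub>2\<close>; hence \<open>\<parallel>h\<parallel>\<^sub>1 \<le> 2\<surd>k \<parallel>h\<parallel>\<^sub>2 \<le> 4\<surd>k \<eta>\<close>.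
  The \<open>\<ell>\<^sub>2\<close> bound \<open>2\<eta>\<close> obtained this way is stronger than the stated \<open>6\<eta>\<close>.
\<close>

definition cinner :: "complex ^'n \<Rightarrow> complex ^'n \<Rightarrow> complex" where
  "cinner x y = (\<Sum>i\<in>UNIV. x $ i * cnj (y $ i))"

lemma cinner_self: "cinner x x = complex_of_real ((norm x)\<^sup>2)"
proof -
  have "(norm x)\<^sup>2 = (\<Sum>i\<in>UNIV. (cmod (x $ i))\<^sup>2)"
    by (simp add: norm_vec_def L2_set_def sum_nonneg)
  then show ?thesis
    by (simp only: cinner_def of_real_sum complex_norm_square)
qed

lemma cinner_mat_vec_adjoint:
  fixes F :: "complex ^'n ^'m"
  shows "cinner (F *v x) y = cinner x (adjoint_mat F *v y)"
proof -
  have "cinner (F *v x) y = (\<Sum>i\<in>UNIV. \<Sum>j\<in>UNIV. F $ i $ j * x $ j * cnj (y $ i))"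
    by (simp add: cinner_def matrix_vector_mult_def sum_distrib_right)
  also have "\<dots> = (\<Sum>j\<in>UNIV. \<Sum>i\<in>UNIV. F $ i $ j * x $ j * cnj (y $ i))"
    by (rule sum.swap)
  also have "\<dots> = cinner x (adjoint_mat F *v y)"
    by (simp add: cinner_def matrix_vector_mult_def adjoint_mat_def sum_distrib_left mult_ac)
  finally show ?thesis .
qed

lemma norm_mat_vec_isometry:
  fixes F :: "complex ^'n ^'m"
  assumes "adjoint_mat F ** F = mat 1"
  shows "norm (F *v x) = norm x"
proof -
  have "complex_of_real ((norm (F *v x))\<^sup>2) = cinner x (adjoint_mat F *v (F *v x))"
    by (simp only: cinner_self [symmetric] cinner_mat_vec_adjoint)
  also have "\<dots> = complex_of_real ((norm x)\<^sup>2)"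
    by (simp only: matrix_vector_mul_assoc assms matrix_vector_mul_lid cinner_self)
  finally show ?thesis
    by (simp only: of_real_eq_iff power2_eq_iff_nonneg norm_ge_zero)
qed

lemma l1_norm_split:
  "l1_norm v = (\<Sum>i\<in>S. cmod (v $ i)) + (\<Sum>i\<in>-S. cmod (v $ i))"
  unfolding l1_norm_def
  by (subst sum.union_disjoint [symmetric]) (auto intro: sum.cong)

lemma l1_norm_le_imp_tail_le_head:
  fixes x z :: "complex ^'n"
  assumes support: "\<And>i. i \<notin> S \<Longrightarrow> x $ i = 0"
    and l1_le: "l1_norm z \<le> l1_norm x"
  shows "(\<Sum>i\<in>-S. cmod ((z - x) $ i)) \<le> (\<Sum>i\<in>S. cmod ((z - x) $ i))"
proof -
  let ?h = "z - x"
  have head: "(\<Sum>i\<in>S. cmod (x $ i)) \<le> (\<Sum>i\<in>S. cmod (z $ i)) + (\<Sum>i\<in>S. cmod (?h $ i))"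
    unfolding sum.distrib [symmetric]
  proof (rule sum_mono)
    fix i
    have "x $ i = z $ i - ?h $ i"
      by simp
    then show "cmod (x $ i) \<le> cmod (z $ i) + cmod (?h $ i)"
      by (metis norm_triangle_ineq4)
  qed
  have tail_x: "(\<Sum>i\<in>-S. cmod (x $ i)) = 0"
    using support by simp
  have tail_z: "(\<Sum>i\<in>-S. cmod (z $ i)) = (\<Sum>i\<in>-S. cmod (?h $ i))"
    using support by (intro sum.cong) auto
  show ?thesis
    using l1_le head tail_x tail_z l1_norm_split [of z S] l1_norm_split [of x S] by linarith
qed

lemma sum_cmod_le_sqrt_card_norm:
  fixes v :: "complex ^'n"
  shows "(\<Sum>i\<in>S. cmod (v $ i)) \<le> sqrt (card S) * norm v"
proof -
  have "(\<Sum>i\<in>S. cmod (v $ i)) \<le> L2_set (\<lambda>i. cmod (v $ i)) S * sqrt (card S)"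
    using L2_set_mult_ineq [of "\<lambda>i. cmod (v $ i)" "\<lambda>_. 1" S] by (simp add: L2_set_constant)
  also have "\<dots> \<le> norm v * sqrt (card S)"
  proof (rule mult_right_mono)
    show "L2_set (\<lambda>i. cmod (v $ i)) S \<le> norm v"
      unfolding norm_vec_def L2_set_def by (intro real_sqrt_le_mono sum_mono2) auto
  qed simp
  finally show ?thesis
    by (simp add: mult.commute)
qed

lemma l1_norm_diff_le_of_l1_minimal:
  fixes x z :: "complex ^'n"
  assumes "\<And>i. i \<notin> S \<Longrightarrow> x $ i = 0"
    and "l1_norm z \<le> l1_norm x"
  shows "l1_norm (z - x) \<le> 2 * sqrt (card S) * norm (z - x)"
  using l1_norm_split [of "z - x" S] l1_norm_le_imp_tail_le_head [where S = S, OF assms]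
    sum_cmod_le_sqrt_card_norm [of "z - x" S]
  by linarith

theorem theorem3:
  fixes F :: "complex ^'n ^'n" and xhat e y xs :: "complex ^'n"
    and k :: nat and \<eta> :: real
  assumes "unitary_mat F"
    and "sparse k xhat"
    and "y = F *v xhat + e"
    and "norm e \<le> \<eta>"
    and "bp_solution F y \<eta> xs"
  shows "l1_norm (xs - xhat) \<le> 4 * sqrt (real k) * \<eta> \<and> norm (xs - xhat) \<le> 6 * \<eta>"
proof -
  define S where "S = {i. xhat $ i \<noteq> 0}"
  have xs_feasible: "norm (F *v xs - y) \<le> \<eta>"
    and xs_minimal: "\<And>z. norm (F *v z - y) \<le> \<eta> \<Longrightarrow> l1_norm xs \<le> l1_norm z"
    using assms(5) unfolding bp_solution_def by auto
  have "l1_norm xs \<le> l1_norm xhat"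
    using assms(3,4) by (intro xs_minimal) simp
  then have l1_bound: "l1_norm (xs - xhat) \<le> 2 * sqrt (card S) * norm (xs - xhat)"
    by (intro l1_norm_diff_le_of_l1_minimal) (simp add: S_def)
  have "F *v (xs - xhat) = (F *v xs - y) + e"
    using assms(3) by (simp add: matrix_vector_mult_diff_distrib)
  then have "norm (xs - xhat) \<le> norm (F *v xs - y) + norm e"
    using assms(1) unfolding unitary_mat_def by (metis norm_mat_vec_isometry norm_triangle_ineq)
  then have l2_bound: "norm (xs - xhat) \<le> 2 * \<eta>"
    using xs_feasible assms(4) by linarith
  have "sqrt (card S) \<le> sqrt k"
    using assms(2) by (simp add: sparse_def S_def)
  then have "2 * sqrt (card S) * norm (xs - xhat) \<le> 2 * sqrt k * (2 * \<eta>)"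
    using l2_bound by (intro mult_mono) auto
  with l1_bound have "l1_norm (xs - xhat) \<le> 4 * sqrt k * \<eta>"
    by linarith
  moreover have "norm (xs - xhat) \<le> 6 * \<eta>"
    using l2_bound assms(4) norm_ge_zero [of e] by linarith
  ultimately show ?thesis ..
qed

end
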